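(* There exist preference-based argumentation frameworks $AF_p=(AR,Attacks,Prefs)$ and $AF'_p=(AR',Attacks',Prefs')$ with $AF_p\preceq_{NP}AF'_p$ such that $\tau_{preferred}(AF'_p)\subseteq AR$ but $\tau_{preferred}(AF'_p)\neq\tau_{preferred}(AF_p)$.
   Context: A preference-based argumentation framework is a triple $(AR,Attacks,Prefs)$ where $AR$ is a finite set of arguments, $Attacks\subseteq AR\times AR$ (with $(b,a)\in Attacks$ read "$b$ attacks $a$"), and $Prefs$ is a partial or total ordering on $AR$, written $a\succeq b$. The set of acceptable arguments is $\tau_{preferred}(AF_p)=\{a\in AR: \text{for every } b\in AR,\ (b,a)\in Attacks \text{ implies } a\succeq b\}$. $AF'_p=(AR',Attacks',Prefs')$ is a normal expansion of $AF_p=(AR,Attacks,Prefs)$, written $AF_p\preceq_{NP}AF'_p$, iff $AR\subseteq AR'$, $Attacks\subseteq Attacks'$, every $(a,b)\in Attacks'\setminus Attacks$ has $a\in AR'\setminus AR$ or $b\in AR'\setminus AR$, $Prefs\subseteq Prefs'$, and every $(a\succeq b)\in Prefs'\setminus Prefs$ has $a\in AR'\setminus AR$ or $b\in AR'\setminus AR$. *)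

theory Defs
  imports Main
begin

text \<open>Attacks: pair (b,a) means b attacks a.  Prefs: pair (a,b) means a \<succeq> b.\<close>

definition is_paf :: "'a set \<Rightarrow> ('a \<times> 'a) set \<Rightarrow> ('a \<times> 'a) set \<Rightarrow> bool" where
  "is_paf AR Att Pr \<longleftrightarrow> finite AR \<and> Att \<subseteq> AR \<times> AR \<and> Pr \<subseteq> AR \<times> AR
      \<and> refl_on AR Pr \<and> antisym Pr \<and> trans Pr"

definition tau_preferred :: "'a set \<Rightarrow> ('a \<times> 'a) set \<Rightarrow> ('a \<times> 'a) set \<Rightarrow> 'a set" where
  "tau_preferred AR Att Pr = {a \<in> AR. \<forall>b \<in> AR. (b, a) \<in> Att \<longrightarrow> (a, b) \<in> Pr}"

definition normal_expansion ::
  "'a set \<Rightarrow> ('a \<times> 'a) set \<Rightarrow> ('a \<times> 'a) set \<Rightarrow> 'a set \<Rightarrow> ('a \<times> 'a) set \<Rightarrow> ('a \<times> 'a) set \<Rightarrow> bool" where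
  "normal_expansion AR Att Pr AR' Att' Pr' \<longleftrightarrow>
     AR \<subseteq> AR' \<and> Att \<subseteq> Att'
     \<and> (\<forall>(a, b) \<in> Att' - Att. a \<in> AR' - AR \<or> b \<in> AR' - AR)
     \<and> Pr \<subseteq> Pr'
     \<and> (\<forall>(a, b) \<in> Pr' - Pr. a \<in> AR' - AR \<or> b \<in> AR' - AR)"

end

theory Submission
  imports Defs
begin

text \<open>Start from the single argument 0, unattacked and hence acceptable. Expand it by a new
  argument 1 that attacks 0 and is attacked back, adding no strict preferences. Each argument
  now has an attacker it is not preferred to, so nothing is acceptable: the acceptable set
  shrinks from {0} to the empty set, which is trivially contained in the old arguments.\<close>

lemma is_paf_Id_on:
  assumes "finite AR" and "Att \<subseteq> AR \<times> AR"
  shows "is_paf AR Att (Id_on AR)"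
  using assms by (auto simp: is_paf_def refl_on_def antisym_def trans_def)

lemma tau_preferred_no_attacks: "tau_preferred AR {} Pr = AR"
  by (simp add: tau_preferred_def)

lemma tau_preferred_Id_on:
  "tau_preferred AR Att (Id_on AR) = {a \<in> AR. \<forall>b \<in> AR. (b, a) \<in> Att \<longrightarrow> b = a}"
  by (auto simp: tau_preferred_def)

lemma normal_expansion_Id_on:
  assumes "AR \<subseteq> AR'" and "Att \<subseteq> Att'" and "Att' \<subseteq> AR' \<times> AR'"
    and "Att' \<inter> AR \<times> AR \<subseteq> Att"
  shows "normal_expansion AR Att (Id_on AR) AR' Att' (Id_on AR')"
  using assms by (fastforce simp: normal_expansion_def)

theorem proposition49:
  shows "\<exists>(AR :: nat set) Att Pr AR' Att' Pr'.
    is_paf AR Att Pr \<and> is_paf AR' Att' Pr' \<and>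
    normal_expansion AR Att Pr AR' Att' Pr' \<and>
    tau_preferred AR' Att' Pr' \<subseteq> AR \<and>
    tau_preferred AR' Att' Pr' \<noteq> tau_preferred AR Att Pr"
proof -
  define AR' :: "nat set" where "AR' = {0, 1}"
  define Att' :: "(nat \<times> nat) set" where "Att' = {(0, 1), (1, 0)}"
  have "is_paf {0} {} (Id_on {0})"
    by (rule is_paf_Id_on) auto
  moreover have "is_paf AR' Att' (Id_on AR')"
    by (rule is_paf_Id_on) (auto simp: AR'_def Att'_def)
  moreover have "normal_expansion {0} {} (Id_on {0}) AR' Att' (Id_on AR')"
    by (rule normal_expansion_Id_on) (auto simp: AR'_def Att'_def)
  moreover have "tau_preferred AR' Att' (Id_on AR') = {}"
    by (auto simp: tau_preferred_Id_on AR'_def Att'_def)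
  moreover have "tau_preferred {0} {} (Id_on {0}) = {0}"
    by (rule tau_preferred_no_attacks)
  ultimately show ?thesis by blast
qed

end
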